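(* Let $\mathcal{L}$ be the generator of a trace preserving quantum dynamical semigroup on $\mathfrak{T}(\mathcal{H})$ which is matrix normal with respect to an orthonormal basis $\{e_k\}$; put $\mathcal{D}_e=\mathrm{span}\{e_k\}$, $\mathcal{D}_e^2=\mathrm{span}\{|e_k\rangle\langle e_\ell|\}$. Fix $\chi\in\mathcal{D}_e$ with $\|\chi\|=1$, and define the operator $M$ on $\mathcal{D}(M)=\{\psi\in\mathcal{H}:|\psi\rangle\langle\chi|\in\mathcal{D}(\mathcal{L})\}$ by $$M\psi=-\mathcal{L}(|\psi\rangle\langle\chi|)\chi+\tfrac12\langle\chi|\mathcal{L}(|\chi\rangle\langle\chi|)|\chi\rangle\,\psi .$$ Then $\mathcal{D}_e\subset\mathcal{D}(M)$, and the map $\mathcal{L}_+$ defined on $\mathcal{D}_e^2$ by $\mathcal{L}_+(\rho)=\mathcal{L}(\rho)+M\rho+\rho M^\dagger$, i.e. by linear extension of $\mathcal{L}_+(|\phi\rangle\langle\psi|)=\mathcal{L}(|\phi\rangle\langle\psi|)+|M\phi\rangle\langle\psi|+|\phi\rangle\langle M\psi|$ for $\phi,\psi\in\mathcal{D}_e$, is a completely positive map from $\mathcal{D}_e^2$ into $\mathfrak{T}(\mathcal{H})$: for all $N$, all $\phi_1,\dots,\phi_N\in\mathcal{D}_e$ and all $\psi_1,\dots,\psi_N\in\mathcal{H}$, $\sum_{k,\ell}\langle\psi_k|\mathcal{L}_+(|\phi_k\rangle\langle\phi_\ell|)|\psi_\ell\rangle\ge0$.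
   Context: $\mathcal{H}$ is a separable Hilbert space, $\mathfrak{T}(\mathcal{H})$ the trace class operators with trace norm. A trace preserving quantum dynamical semigroup is a strongly continuous semigroup $(\mathcal{T}^t)_{t\ge0}$ of trace preserving completely positive maps on $\mathfrak{T}(\mathcal{H})$, with generator $\mathcal{L}(\rho)=\lim_{t\to0}\frac1t(\mathcal{T}^t(\rho)-\rho)$ (trace norm limit, domain where it exists). Matrix normal with respect to $\{e_k\}$ means $\mathcal{D}_e^2$ is a core for $\mathcal{L}$. *)

theory Defs
  imports "HOL-Analysis.Analysis"
begin

text \<open>Model: the separable Hilbert space H is l2 over a countable index type 'i,
  the orthonormal basis {e_k} is the standard basis.  Operators are represented by
  their matrices A i j = <e_i, A e_j>.\<close>

type_synonym 'i vec = "'i \<Rightarrow> complex"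
type_synonym 'i mat = "'i \<Rightarrow> 'i \<Rightarrow> complex"

definition ell2 :: "'i vec set" where
  "ell2 = {x. (\<lambda>i. (cmod (x i))^2) summable_on UNIV}"

definition vnorm :: "'i vec \<Rightarrow> real" where
  "vnorm x = sqrt (infsum (\<lambda>i. (cmod (x i))^2) UNIV)"

definition cinner :: "'i vec \<Rightarrow> 'i vec \<Rightarrow> complex" where
  "cinner x y = infsum (\<lambda>i. cnj (x i) * y i) UNIV"

definition basis :: "'i \<Rightarrow> 'i vec" where
  "basis k = (\<lambda>i. if i = k then 1 else 0)"

definition outer :: "'i vec \<Rightarrow> 'i vec \<Rightarrow> 'i mat" where
  "outer \<phi> \<psi> = (\<lambda>i j. \<phi> i * cnj (\<psi> j))"

definition mat_app :: "'i mat \<Rightarrow> 'i vec \<Rightarrow> 'i vec" where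
  "mat_app A x = (\<lambda>i. infsum (\<lambda>j. A i j * x j) UNIV)"

definition madd :: "'i mat \<Rightarrow> 'i mat \<Rightarrow> 'i mat" where
  "madd A B = (\<lambda>i j. A i j + B i j)"

definition msub :: "'i mat \<Rightarrow> 'i mat \<Rightarrow> 'i mat" where
  "msub A B = (\<lambda>i j. A i j - B i j)"

definition mscale :: "complex \<Rightarrow> 'i mat \<Rightarrow> 'i mat" where
  "mscale c A = (\<lambda>i j. c * A i j)"

definition mtrace :: "'i mat \<Rightarrow> complex" where
  "mtrace A = infsum (\<lambda>i. A i i) UNIV"

text \<open>Nuclear representation A = sum_n |u_n><v_n| with sum_n ||u_n|| ||v_n|| finite.
  Trace class = nuclear operators; trace norm = nuclear norm.\<close>
definition nuclear_rep :: "'i mat \<Rightarrow> (nat \<Rightarrow> 'i vec) \<Rightarrow> (nat \<Rightarrow> 'i vec) \<Rightarrow> bool" where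
  "nuclear_rep A u v \<longleftrightarrow>
     (\<forall>n. u n \<in> ell2 \<and> v n \<in> ell2) \<and>
     summable (\<lambda>n. vnorm (u n) * vnorm (v n)) \<and>
     (\<forall>i j. ((\<lambda>n. u n i * cnj (v n j)) has_sum A i j) UNIV)"

definition trace_class :: "'i mat \<Rightarrow> bool" where
  "trace_class A \<longleftrightarrow> (\<exists>u v. nuclear_rep A u v)"

definition tnorm :: "'i mat \<Rightarrow> real" where
  "tnorm A = Inf {suminf (\<lambda>n. vnorm (u n) * vnorm (v n)) | u v. nuclear_rep A u v}"

definition tc_linear :: "('i mat \<Rightarrow> 'i mat) \<Rightarrow> bool" where
  "tc_linear \<Phi> \<longleftrightarrow> (\<forall>A B a b. trace_class A \<and> trace_class B \<longrightarrow>
      \<Phi> (madd (mscale a A) (mscale b B)) = madd (mscale a (\<Phi> A)) (mscale b (\<Phi> B)))"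

definition cnonneg :: "complex \<Rightarrow> bool" where
  "cnonneg z \<longleftrightarrow> Im z = 0 \<and> Re z \<ge> 0"

definition cp_on :: "'i vec set \<Rightarrow> ('i mat \<Rightarrow> 'i mat) \<Rightarrow> bool" where
  "cp_on D \<Phi> \<longleftrightarrow> (\<forall>(N::nat) \<phi> \<psi>. (\<forall>k<N. \<phi> k \<in> D \<and> \<psi> k \<in> ell2) \<longrightarrow>
      cnonneg (\<Sum>k<N. \<Sum>l<N. cinner (\<psi> k) (mat_app (\<Phi> (outer (\<phi> k) (\<phi> l))) (\<psi> l))))"

definition qds :: "(real \<Rightarrow> 'i mat \<Rightarrow> 'i mat) \<Rightarrow> bool" where
  "qds T \<longleftrightarrow>
     (\<forall>t\<ge>0. \<forall>A. trace_class A \<longrightarrow> trace_class (T t A)) \<and>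
     (\<forall>t\<ge>0. tc_linear (T t)) \<and>
     (\<forall>t\<ge>0. \<exists>C. \<forall>A. trace_class A \<longrightarrow> tnorm (T t A) \<le> C * tnorm A) \<and>
     (\<forall>A. trace_class A \<longrightarrow> T 0 A = A) \<and>
     (\<forall>s t A. s \<ge> 0 \<and> t \<ge> 0 \<and> trace_class A \<longrightarrow> T (s + t) A = T s (T t A)) \<and>
     (\<forall>A. trace_class A \<longrightarrow> ((\<lambda>t. tnorm (msub (T t A) A)) \<longlongrightarrow> 0) (at_right 0)) \<and>
     (\<forall>t\<ge>0. \<forall>A. trace_class A \<longrightarrow> mtrace (T t A) = mtrace A) \<and>
     (\<forall>t\<ge>0. cp_on ell2 (T t))"

definition has_gen :: "(real \<Rightarrow> 'i mat \<Rightarrow> 'i mat) \<Rightarrow> 'i mat \<Rightarrow> 'i mat \<Rightarrow> bool" where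
  "has_gen T A B \<longleftrightarrow> trace_class A \<and> trace_class B \<and>
     ((\<lambda>t. tnorm (msub (mscale (complex_of_real (1 / t)) (msub (T t A) A)) B)) \<longlongrightarrow> 0) (at_right 0)"

definition gen_dom :: "(real \<Rightarrow> 'i mat \<Rightarrow> 'i mat) \<Rightarrow> 'i mat set" where
  "gen_dom T = {A. \<exists>B. has_gen T A B}"

definition gen :: "(real \<Rightarrow> 'i mat \<Rightarrow> 'i mat) \<Rightarrow> 'i mat \<Rightarrow> 'i mat" where
  "gen T A = (THE B. has_gen T A B)"

text \<open>D_e = span{e_k} (finitely supported vectors), D_e^2 = span{|e_k><e_l|}.\<close>
definition De :: "'i vec set" where
  "De = {x. finite {i. x i \<noteq> 0}}"

definition De2 :: "'i mat set" where
  "De2 = {A. finite {(i, j). A i j \<noteq> 0}}"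

text \<open>D_e^2 is a core for the generator.\<close>
definition matrix_normal :: "(real \<Rightarrow> 'i mat \<Rightarrow> 'i mat) \<Rightarrow> bool" where
  "matrix_normal T \<longleftrightarrow> De2 \<subseteq> gen_dom T \<and>
     (\<forall>A\<in>gen_dom T. \<exists>X. (\<forall>n. X n \<in> De2) \<and>
        (\<lambda>n. tnorm (msub (X n) A)) \<longlonglongrightarrow> 0 \<and>
        (\<lambda>n. tnorm (msub (gen T (X n)) (gen T A))) \<longlonglongrightarrow> 0)"

definition Mdom :: "(real \<Rightarrow> 'i mat \<Rightarrow> 'i mat) \<Rightarrow> 'i vec \<Rightarrow> 'i vec set" where
  "Mdom T chi = {\<psi>. \<psi> \<in> ell2 \<and> outer \<psi> chi \<in> gen_dom T}"

definition Mop :: "(real \<Rightarrow> 'i mat \<Rightarrow> 'i mat) \<Rightarrow> 'i vec \<Rightarrow> 'i vec \<Rightarrow> 'i vec" where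
  "Mop T chi \<psi> = (\<lambda>i. - mat_app (gen T (outer \<psi> chi)) chi i
      + (1/2) * cinner chi (mat_app (gen T (outer chi chi)) chi) * \<psi> i)"

text \<open>L_+(rho) = L(rho) + M rho + rho M^dagger for rho in D_e^2 (finite sums).\<close>
definition Lplus :: "(real \<Rightarrow> 'i mat \<Rightarrow> 'i mat) \<Rightarrow> 'i vec \<Rightarrow> 'i mat \<Rightarrow> 'i mat" where
  "Lplus T chi \<rho> = (\<lambda>i j. gen T \<rho> i j
      + infsum (\<lambda>k. Mop T chi (basis k) i * \<rho> k j) UNIV
      + infsum (\<lambda>l. \<rho> i l * cnj (Mop T chi (basis l) j)) UNIV)"

end

theory Submission
  imports Defs
begin

(* Differentiating the complete positivity of T t at t = 0 shows that the generator L is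
   conditionally completely positive: sum_{k,l} <psi_k| L(|phi_k><phi_l|) |psi_l> >= 0 whenever
   sum_k <psi_k|phi_k> = 0, since then the rank-one terms drop out of the difference quotients.
   For arbitrary families put a = sum_k <psi_k|phi_k> and append phi_N = chi, psi_N = -cnj(a) chi;
   this makes the family admissible.  As <psi|M phi> = c <psi|phi> - <psi| L(|phi><chi|) |chi>
   with c = <chi| L(|chi><chi|) |chi>/2 real (L preserves hermiticity), the resulting nonnegative
   sum is exactly the sum for L_+.  Operators enter only through their matrix elements <x|A|y>,
   which are bounded by the trace norm, so trace-norm limits become limits of complex numbers. *)

section \<open>Square-summable vectors\<close>

lemma ell2_summable: "x \<in> ell2 \<Longrightarrow> (\<lambda>i. (cmod (x i))^2) summable_on UNIV"
  by (simp add: ell2_def)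

lemma vnorm_nonneg: "vnorm x \<ge> 0"
  by (simp add: vnorm_def infsum_nonneg)

lemma vnorm_power2: "(vnorm x)^2 = infsum (\<lambda>i. (cmod (x i))^2) UNIV"
  unfolding vnorm_def by (simp add: infsum_nonneg)

lemma sum_norm_power2_le_vnorm:
  assumes "x \<in> ell2" "finite F"
  shows "(\<Sum>i\<in>F. (cmod (x i))^2) \<le> (vnorm x)^2"
  using finite_sum_le_infsum[OF ell2_summable[OF assms(1)] assms(2)] by (simp add: vnorm_power2)

lemma norm_le_vnorm: "x \<in> ell2 \<Longrightarrow> cmod (x i) \<le> vnorm x"
  using sum_norm_power2_le_vnorm[of x "{i}"] by (auto intro: power2_le_imp_le[OF _ vnorm_nonneg])

lemma sum_norm_mult_le_vnorm:
  assumes "x \<in> ell2" "y \<in> ell2" "finite F"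
  shows "(\<Sum>i\<in>F. cmod (x i) * cmod (y i)) \<le> vnorm x * vnorm y"
proof -
  have "(\<Sum>i\<in>F. cmod (x i) * cmod (y i))^2 \<le> (\<Sum>i\<in>F. (cmod (x i))^2) * (\<Sum>i\<in>F. (cmod (y i))^2)"
    by (rule Cauchy_Schwarz_ineq_sum)
  also have "\<dots> \<le> (vnorm x)^2 * (vnorm y)^2"
    using assms by (intro mult_mono sum_norm_power2_le_vnorm) (auto intro: sum_nonneg)
  also have "\<dots> = (vnorm x * vnorm y)^2" by (simp add: power_mult_distrib)
  finally show ?thesis by (rule power2_le_imp_le) (simp add: vnorm_nonneg)
qed

lemma cinner_abs_summable:
  assumes "x \<in> ell2" "y \<in> ell2"
  shows "(\<lambda>i. norm (cnj (x i) * y i)) summable_on UNIV"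
proof (rule nonneg_bdd_above_summable_on)
  show "bdd_above (sum (\<lambda>i. norm (cnj (x i) * y i)) ` {F. F \<subseteq> UNIV \<and> finite F})"
    using sum_norm_mult_le_vnorm[OF assms]
    by (intro bdd_aboveI2[where M="vnorm x * vnorm y"]) (auto simp: norm_mult)
qed simp

lemma cinner_summable: "x \<in> ell2 \<Longrightarrow> y \<in> ell2 \<Longrightarrow> (\<lambda>i. cnj (x i) * y i) summable_on UNIV"
  by (rule abs_summable_summable[OF cinner_abs_summable])

lemma ell2_scale: "x \<in> ell2 \<Longrightarrow> (\<lambda>i. c * x i) \<in> ell2"
  using summable_on_cmult_right[OF ell2_summable, of x "(cmod c)^2"]
  by (simp add: ell2_def norm_mult power_mult_distrib)

lemma vnorm_scale: "vnorm (\<lambda>i. c * x i) = cmod c * vnorm x"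
  unfolding vnorm_def
  by (simp add: norm_mult power_mult_distrib infsum_cmult_right' real_sqrt_mult)

lemma ell2_add:
  assumes "x \<in> ell2" "y \<in> ell2"
  shows "(\<lambda>i. x i + y i) \<in> ell2"
proof -
  have dominant: "(\<lambda>i. 2 * (cmod (x i))^2 + 2 * (cmod (y i))^2) summable_on UNIV"
    using assms by (intro summable_on_add summable_on_cmult_right ell2_summable)
  have "(cmod (x i + y i))^2 \<le> 2 * (cmod (x i))^2 + 2 * (cmod (y i))^2" for i
  proof -
    have "(cmod (x i + y i))^2 \<le> (cmod (x i) + cmod (y i))^2"
      by (rule power_mono[OF norm_triangle_ineq]) simp
    moreover have "0 \<le> (cmod (x i) - cmod (y i))^2" by simp
    ultimately show ?thesis unfolding power2_sum power2_diff by linarith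
  qed
  then have "(\<lambda>i. (cmod (x i + y i))^2) summable_on UNIV"
    by (intro summable_on_comparison_test[OF dominant]) auto
  then show ?thesis by (simp add: ell2_def)
qed

lemma ell2_diff: "x \<in> ell2 \<Longrightarrow> y \<in> ell2 \<Longrightarrow> (\<lambda>i. x i - y i) \<in> ell2"
  using ell2_add[OF _ ell2_scale[of y "-1"]] by simp

lemma ell2_finite_support: "finite {i. x i \<noteq> 0} \<Longrightarrow> x \<in> ell2"
  unfolding ell2_def
  by (simp, subst summable_on_cong_neutral[where T="{i. x i \<noteq> 0}"]) auto

lemma ell2_zero: "(\<lambda>_. 0) \<in> ell2"
  by (rule ell2_finite_support) simp

lemma ell2_sum: "finite S \<Longrightarrow> (\<And>k. k \<in> S \<Longrightarrow> f k \<in> ell2) \<Longrightarrow> (\<lambda>i. \<Sum>k\<in>S. f k i) \<in> ell2"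
  by (induction S rule: finite_induct) (auto simp: ell2_zero intro!: ell2_add)

lemma De_imp_ell2: "x \<in> De \<Longrightarrow> x \<in> ell2"
  by (simp add: De_def ell2_finite_support)

lemma basis_De: "basis k \<in> De"
  by (simp add: De_def basis_def)

lemma basis_ell2: "basis k \<in> ell2"
  by (rule De_imp_ell2[OF basis_De])

lemma De_basis_expansion: "x \<in> De \<Longrightarrow> x i = (\<Sum>k\<in>{k. x k \<noteq> 0}. x k * basis k i)"
proof -
  have "(\<Sum>k\<in>{k. x k \<noteq> 0}. x k * basis k i) = (\<Sum>k\<in>{k. x k \<noteq> 0}. if i = k then x k else 0)"
    by (rule sum.cong) (auto simp: basis_def)
  also assume "x \<in> De"
  then have "(\<Sum>k\<in>{k. x k \<noteq> 0}. if i = k then x k else 0) = x i"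
    by (simp add: De_def sum.delta)
  finally show ?thesis ..
qed

lemma vnorm_finite_support:
  assumes "finite F" "\<And>i. i \<notin> F \<Longrightarrow> x i = 0"
  shows "vnorm x = sqrt (\<Sum>i\<in>F. (cmod (x i))^2)"
  unfolding vnorm_def using assms
  by (subst infsum_cong_neutral[where T=F and g="\<lambda>i. (cmod (x i))^2"]) auto

lemma cinner_finite_support:
  assumes "finite F" "\<And>i. i \<notin> F \<Longrightarrow> cnj (x i) * y i = 0"
  shows "cinner x y = (\<Sum>i\<in>F. cnj (x i) * y i)"
  unfolding cinner_def using assms
  by (subst infsum_cong_neutral[where T=F and g="\<lambda>i. cnj (x i) * y i"]) auto

lemma vnorm_basis: "vnorm (basis k) = 1"
  by (subst vnorm_finite_support[of "{k}"]) (auto simp: basis_def)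

lemma cinner_self:
  assumes "x \<in> ell2"
  shows "cinner x x = complex_of_real ((vnorm x)^2)"
proof -
  have "((\<lambda>i. complex_of_real ((cmod (x i))^2)) has_sum complex_of_real ((vnorm x)^2)) UNIV"
    unfolding vnorm_power2 by (intro has_sum_of_real has_sum_infsum ell2_summable assms)
  moreover have "(\<lambda>i. complex_of_real ((cmod (x i))^2)) = (\<lambda>i. cnj (x i) * x i)"
    by (simp add: complex_norm_square mult.commute del: of_real_power)
  ultimately show ?thesis
    unfolding cinner_def by (metis infsumI)
qed

lemma cinner_commute: "cinner y x = cnj (cinner x y)"
  unfolding cinner_def by (simp flip: infsum_cnj add: mult.commute)

lemma cinner_basis: "cinner (basis i) z = z i"
  unfolding cinner_def basis_def
  by (subst infsum_cong_neutral[where T="{i}" and g="\<lambda>_. z i"]) auto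

lemma cinner_add_right:
  "x \<in> ell2 \<Longrightarrow> y \<in> ell2 \<Longrightarrow> z \<in> ell2 \<Longrightarrow> cinner x (\<lambda>i. y i + z i) = cinner x y + cinner x z"
  unfolding cinner_def by (simp add: distrib_left infsum_add cinner_summable)

lemma cinner_scale_right: "cinner x (\<lambda>i. c * y i) = c * cinner x y"
  unfolding cinner_def by (simp add: mult.left_commute infsum_cmult_right')

lemma cinner_diff_right:
  "x \<in> ell2 \<Longrightarrow> y \<in> ell2 \<Longrightarrow> z \<in> ell2 \<Longrightarrow> cinner x (\<lambda>i. y i - z i) = cinner x y - cinner x z"
  using cinner_add_right[of x y "\<lambda>i. -1 * z i"] cinner_scale_right[of x "-1" z] ell2_scale[of z "-1"]
  by simp

lemma cinner_scale_left: "cinner (\<lambda>i. c * x i) y = cnj c * cinner x y"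
  unfolding cinner_def by (simp add: mult.assoc infsum_cmult_right')


section \<open>Matrix elements of trace class operators\<close>

definition braket :: "'i vec \<Rightarrow> 'i mat \<Rightarrow> 'i vec \<Rightarrow> complex" where
  "braket x A y = cinner x (mat_app A y)"

definition braket_terms :: "'i vec \<Rightarrow> 'i mat \<Rightarrow> 'i vec \<Rightarrow> 'i \<times> 'i \<Rightarrow> complex" where
  "braket_terms x A y = (\<lambda>(i, j). cnj (x i) * A i j * y j)"

definition nuclear_sum :: "(nat \<Rightarrow> 'i vec) \<Rightarrow> (nat \<Rightarrow> 'i vec) \<Rightarrow> real" where
  "nuclear_sum u v = (\<Sum>n. vnorm (u n) * vnorm (v n))"

lemma nuclear_rep_entry_summable:
  assumes "nuclear_rep A u v"
  shows "summable (\<lambda>n. cmod (u n i) * cmod (v n j))"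
proof (rule summable_comparison_test')
  show "summable (\<lambda>n. vnorm (u n) * vnorm (v n))"
    using assms by (simp add: nuclear_rep_def)
  fix n
  have "u n \<in> ell2" "v n \<in> ell2"
    using assms by (auto simp: nuclear_rep_def)
  then show "norm (cmod (u n i) * cmod (v n j)) \<le> vnorm (u n) * vnorm (v n)"
    by (simp add: mult_mono norm_le_vnorm vnorm_nonneg abs_mult)
qed

lemma nuclear_rep_entry_bound:
  assumes "nuclear_rep A u v"
  shows "cmod (A i j) \<le> (\<Sum>n. cmod (u n i) * cmod (v n j))"
proof -
  have "(\<lambda>n. u n i * cnj (v n j)) sums A i j"
    using assms by (auto simp: nuclear_rep_def intro: has_sum_imp_sums)
  moreover have "summable (\<lambda>n. norm (u n i * cnj (v n j)))"
    using nuclear_rep_entry_summable[OF assms, of i j] by (simp add: norm_mult)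
  ultimately show ?thesis
    using summable_norm by (fastforce simp: sums_iff norm_mult)
qed

lemma sum_braket_terms_le:
  assumes nr: "nuclear_rep A u v" and x: "x \<in> ell2" and y: "y \<in> ell2" and F: "finite F"
  shows "(\<Sum>p\<in>F. cmod (braket_terms x A y p)) \<le> vnorm x * vnorm y * nuclear_sum u v"
proof -
  have uv: "\<And>n. u n \<in> ell2" "\<And>n. v n \<in> ell2" and S: "summable (\<lambda>n. vnorm (u n) * vnorm (v n))"
    using nr by (auto simp: nuclear_rep_def)
  define F1 where "F1 = fst ` F"
  define F2 where "F2 = snd ` F"
  have f12: "finite F1" "finite F2" using F by (auto simp: F1_def F2_def)
  define g where "g i j n = cmod (u n i) * cmod (v n j)" for i j n
  have g: "summable (g i j)" "cmod (A i j) \<le> suminf (g i j)" for i j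
    unfolding g_def by (rule nuclear_rep_entry_summable[OF nr] nuclear_rep_entry_bound[OF nr])+
  have "(\<Sum>p\<in>F. cmod (braket_terms x A y p)) \<le> (\<Sum>p\<in>F1\<times>F2. cmod (braket_terms x A y p))"
    using f12 by (intro sum_mono2) (force simp: F1_def F2_def)+
  also have "\<dots> = (\<Sum>i\<in>F1. \<Sum>j\<in>F2. cmod (x i) * cmod (y j) * cmod (A i j))"
    by (simp add: sum.cartesian_product braket_terms_def) (rule sum.cong, auto simp: norm_mult)
  also have "\<dots> \<le> (\<Sum>i\<in>F1. \<Sum>j\<in>F2. cmod (x i) * cmod (y j) * suminf (g i j))"
    by (intro sum_mono mult_left_mono g) auto
  also have "\<dots> = (\<Sum>n. \<Sum>i\<in>F1. \<Sum>j\<in>F2. cmod (x i) * cmod (y j) * g i j n)"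
    by (simp add: suminf_mult suminf_sum summable_sum summable_mult g)
  also have "\<dots> \<le> (\<Sum>n. vnorm x * vnorm y * (vnorm (u n) * vnorm (v n)))"
  proof (rule suminf_le)
    fix n
    have "(\<Sum>i\<in>F1. \<Sum>j\<in>F2. cmod (x i) * cmod (y j) * g i j n)
        = (\<Sum>i\<in>F1. cmod (x i) * cmod (u n i)) * (\<Sum>j\<in>F2. cmod (y j) * cmod (v n j))"
      by (simp add: g_def sum_product mult_ac)
    also have "\<dots> \<le> (vnorm x * vnorm (u n)) * (vnorm y * vnorm (v n))"
      by (intro mult_mono sum_norm_mult_le_vnorm x y uv f12) (auto intro: sum_nonneg mult_nonneg_nonneg vnorm_nonneg)
    finally show "(\<Sum>i\<in>F1. \<Sum>j\<in>F2. cmod (x i) * cmod (y j) * g i j n)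
        \<le> vnorm x * vnorm y * (vnorm (u n) * vnorm (v n))"
      by (simp add: mult_ac)
  qed (auto intro!: summable_sum summable_mult g S)
  also have "\<dots> = vnorm x * vnorm y * nuclear_sum u v"
    by (simp add: nuclear_sum_def suminf_mult S)
  finally show ?thesis .
qed

lemma braket_terms_abs_summable:
  "nuclear_rep A u v \<Longrightarrow> x \<in> ell2 \<Longrightarrow> y \<in> ell2 \<Longrightarrow> (\<lambda>p. norm (braket_terms x A y p)) summable_on UNIV"
  by (rule nonneg_bdd_above_summable_on)
     (auto intro!: bdd_aboveI2[where M="vnorm x * vnorm y * nuclear_sum u v"] sum_braket_terms_le)

lemma braket_terms_summable:
  "trace_class A \<Longrightarrow> x \<in> ell2 \<Longrightarrow> y \<in> ell2 \<Longrightarrow> braket_terms x A y summable_on UNIV"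
  unfolding trace_class_def using abs_summable_summable braket_terms_abs_summable by blast

lemma braket_eq_infsum_terms:
  assumes "braket_terms x A y summable_on UNIV"
  shows "braket x A y = infsum (braket_terms x A y) UNIV"
proof -
  have "braket x A y = infsum (\<lambda>i. infsum (\<lambda>j. cnj (x i) * A i j * y j) UNIV) UNIV"
    unfolding braket_def cinner_def mat_app_def
    by (simp add: infsum_cmult_right'[symmetric] mult.assoc)
  also have "\<dots> = infsum (\<lambda>(i,j). cnj (x i) * A i j * y j) (Sigma UNIV (\<lambda>_. UNIV))"
    using assms by (intro infsum_Sigma'_banach) (simp add: braket_terms_def)
  finally show ?thesis by (simp add: braket_terms_def)
qed

lemma norm_braket_le_nuclear_sum:
  assumes nr: "nuclear_rep A u v" and x: "x \<in> ell2" and y: "y \<in> ell2"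
  shows "cmod (braket x A y) \<le> vnorm x * vnorm y * nuclear_sum u v"
proof -
  have abs: "(\<lambda>p. norm (braket_terms x A y p)) summable_on UNIV"
    by (rule braket_terms_abs_summable[OF nr x y])
  have "cmod (braket x A y) \<le> infsum (\<lambda>p. norm (braket_terms x A y p)) UNIV"
    unfolding braket_eq_infsum_terms[OF abs_summable_summable[OF abs]]
    by (rule norm_infsum_bound[OF abs])
  also have "\<dots> \<le> vnorm x * vnorm y * nuclear_sum u v"
    by (rule infsum_le_finite_sums[OF abs]) (auto intro: sum_braket_terms_le[OF nr x y])
  finally show ?thesis .
qed

lemma norm_braket_le_tnorm:
  assumes tc: "trace_class A" and x: "x \<in> ell2" and y: "y \<in> ell2"
  shows "cmod (braket x A y) \<le> vnorm x * vnorm y * tnorm A"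
proof (cases "vnorm x * vnorm y = 0")
  case True
  then show ?thesis
    using tc norm_braket_le_nuclear_sum[OF _ x y] by (auto simp: trace_class_def)
next
  case False
  then have pos: "vnorm x * vnorm y > 0"
    using vnorm_nonneg[of x] vnorm_nonneg[of y] by (simp add: less_le)
  have "cmod (braket x A y) / (vnorm x * vnorm y) \<le> tnorm A"
    unfolding tnorm_def
  proof (rule cInf_greatest)
    show "{suminf (\<lambda>n. vnorm (u n) * vnorm (v n)) |u v. nuclear_rep A u v} \<noteq> {}"
      using tc trace_class_def by blast
  next
    fix s assume "s \<in> {suminf (\<lambda>n. vnorm (u n) * vnorm (v n)) |u v. nuclear_rep A u v}"
    then obtain u v where nr: "nuclear_rep A u v" and s: "s = nuclear_sum u v"
      by (auto simp: nuclear_sum_def)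
    show "cmod (braket x A y) / (vnorm x * vnorm y) \<le> s"
      using norm_braket_le_nuclear_sum[OF nr x y] pos by (simp add: s pos_divide_le_eq mult_ac)
  qed
  then show ?thesis using pos by (simp add: pos_divide_le_eq mult_ac)
qed


section \<open>Trace class operators as a vector space\<close>

definition interleave :: "(nat \<Rightarrow> 'a) \<Rightarrow> (nat \<Rightarrow> 'a) \<Rightarrow> nat \<Rightarrow> 'a" where
  "interleave f g n = (if even n then f (n div 2) else g (n div 2))"

lemma has_sum_interleave:
  fixes f g :: "nat \<Rightarrow> 'a::topological_comm_monoid_add"
  assumes "(f has_sum a) UNIV" "(g has_sum b) UNIV"
  shows "(interleave f g has_sum (a + b)) UNIV"
proof -
  have "inj ((*) (2::nat))" "inj (\<lambda>n::nat. 2 * n + 1)"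
    by (auto simp: inj_def)
  moreover have "interleave f g \<circ> (*) 2 = f" "interleave f g \<circ> (\<lambda>n. 2 * n + 1) = g"
    by (auto simp: interleave_def)
  ultimately have "(interleave f g has_sum a) (range ((*) 2))"
    and "(interleave f g has_sum b) (range (\<lambda>n. 2 * n + 1))"
    using has_sum_reindex assms by metis+
  moreover have "range ((*) (2::nat)) \<inter> range (\<lambda>n. 2 * n + 1) = {}"
    by (auto, presburger)
  moreover have "range ((*) (2::nat)) \<union> range (\<lambda>n. 2 * n + 1) = UNIV"
  proof -
    have "m \<in> range ((*) 2) \<union> range (\<lambda>n. 2 * n + 1)" for m :: nat
      by (cases "even m") (auto elim: oddE)
    then show ?thesis by blast
  qed
  ultimately show ?thesis
    by (metis has_sum_Un_disjoint)
qed

lemma summable_interleave: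
  fixes f g :: "nat \<Rightarrow> real"
  assumes "summable f" "summable g" "\<And>n. f n \<ge> 0" "\<And>n. g n \<ge> 0"
  shows "summable (interleave f g)"
proof -
  have "f summable_on UNIV" "g summable_on UNIV"
    using assms summable_on_UNIV_nonneg_real_iff by blast+
  then have "interleave f g summable_on UNIV"
    using has_sum_interleave by (metis summable_on_def)
  then show ?thesis by (rule summable_on_imp_summable)
qed

lemma nuclear_rep_madd:
  assumes "nuclear_rep A u v" "nuclear_rep B u' v'"
  shows "nuclear_rep (madd A B) (interleave u u') (interleave v v')"
proof -
  have "(\<lambda>n. vnorm (interleave u u' n) * vnorm (interleave v v' n))
      = interleave (\<lambda>n. vnorm (u n) * vnorm (v n)) (\<lambda>n. vnorm (u' n) * vnorm (v' n))"
    "(\<lambda>n. interleave u u' n i * cnj (interleave v v' n j))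
      = interleave (\<lambda>n. u n i * cnj (v n j)) (\<lambda>n. u' n i * cnj (v' n j))" for i j
    by (auto simp: interleave_def)
  with assms show ?thesis
    unfolding nuclear_rep_def
    by (auto simp: interleave_def madd_def
        intro!: summable_interleave has_sum_interleave mult_nonneg_nonneg vnorm_nonneg)
qed

lemma nuclear_rep_mscale:
  assumes "nuclear_rep A u v"
  shows "nuclear_rep (mscale c A) (\<lambda>n i. c * u n i) v"
  using assms unfolding nuclear_rep_def
  by (auto simp: mscale_def vnorm_scale mult.assoc intro!: summable_mult ell2_scale has_sum_cmult_right)

lemma trace_class_madd: "trace_class A \<Longrightarrow> trace_class B \<Longrightarrow> trace_class (madd A B)"
  unfolding trace_class_def using nuclear_rep_madd by blast

lemma trace_class_mscale: "trace_class A \<Longrightarrow> trace_class (mscale c A)"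
  unfolding trace_class_def using nuclear_rep_mscale by blast

lemma msub_eq_madd: "msub A B = madd A (mscale (-1) B)"
  by (simp add: msub_def madd_def mscale_def)

lemma trace_class_msub: "trace_class A \<Longrightarrow> trace_class B \<Longrightarrow> trace_class (msub A B)"
  unfolding msub_eq_madd by (intro trace_class_madd trace_class_mscale)

lemma trace_class_outer:
  assumes "x \<in> ell2" "y \<in> ell2"
  shows "trace_class (outer x y)"
proof -
  define u where "u n = (if n = 0 then x else (\<lambda>_. 0))" for n :: nat
  define v where "v n = (if n = 0 then y else (\<lambda>_. 0))" for n :: nat
  have "((\<lambda>n. u n i * cnj (v n j)) has_sum outer x y i j) UNIV" for i j
    by (rule has_sum_cong_neutral[THEN iffD1, OF _ _ _ has_sum_finiteI[of "{0}"]])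
       (auto simp: u_def v_def outer_def)
  moreover have "summable (\<lambda>n. vnorm (u n) * vnorm (v n))"
    by (rule summable_finite[of "{0}"]) (auto simp: u_def v_def vnorm_def)
  ultimately have "nuclear_rep (outer x y) u v"
    using assms ell2_zero by (auto simp: nuclear_rep_def u_def v_def)
  then show ?thesis
    unfolding trace_class_def by blast
qed

definition mzero :: "'i mat" where
  "mzero = (\<lambda>i j. 0)"

definition msum :: "'a set \<Rightarrow> ('a \<Rightarrow> 'i mat) \<Rightarrow> 'i mat" where
  "msum S f = (\<lambda>i j. \<Sum>k\<in>S. f k i j)"

lemma msum_empty: "msum {} f = mzero"
  by (simp add: msum_def mzero_def)

lemma msum_insert: "finite S \<Longrightarrow> k \<notin> S \<Longrightarrow> msum (insert k S) f = madd (f k) (msum S f)"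
  by (simp add: msum_def madd_def)

lemma trace_class_mzero: "trace_class mzero"
  using trace_class_outer[OF ell2_zero ell2_zero] by (simp add: mzero_def outer_def)

lemma trace_class_msum:
  "finite S \<Longrightarrow> (\<And>k. k \<in> S \<Longrightarrow> trace_class (f k)) \<Longrightarrow> trace_class (msum S f)"
  by (induction S rule: finite_induct) (auto simp: msum_empty msum_insert trace_class_mzero trace_class_madd)

lemma De2_mzero: "mzero \<in> De2"
  by (simp add: De2_def mzero_def)

lemma De2_madd:
  assumes "A \<in> De2" "B \<in> De2"
  shows "madd A B \<in> De2"
proof -
  have "{(i, j). madd A B i j \<noteq> 0} \<subseteq> {(i, j). A i j \<noteq> 0} \<union> {(i, j). B i j \<noteq> 0}"
    by (auto simp: madd_def)
  then show ?thesis
    using assms unfolding De2_def by (auto intro: finite_subset)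
qed

lemma De2_mscale:
  assumes "A \<in> De2"
  shows "mscale c A \<in> De2"
proof -
  have "{(i, j). mscale c A i j \<noteq> 0} \<subseteq> {(i, j). A i j \<noteq> 0}"
    by (auto simp: mscale_def)
  then show ?thesis
    using assms unfolding De2_def by (auto intro: finite_subset)
qed

lemma De2_outer:
  assumes "x \<in> De" "y \<in> De"
  shows "outer x y \<in> De2"
proof -
  have "{(i, j). outer x y i j \<noteq> 0} \<subseteq> {i. x i \<noteq> 0} \<times> {j. y j \<noteq> 0}"
    by (auto simp: outer_def)
  then show ?thesis
    using assms unfolding De2_def De_def by (auto intro: finite_subset)
qed

lemma De2_msum: "finite S \<Longrightarrow> (\<And>k. k \<in> S \<Longrightarrow> f k \<in> De2) \<Longrightarrow> msum S f \<in> De2"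
  by (induction S rule: finite_induct) (auto simp: msum_empty msum_insert De2_mzero De2_madd)

lemma outer_basis_expansion:
  assumes "x \<in> De"
  shows "outer x y = msum {k. x k \<noteq> 0} (\<lambda>k. mscale (x k) (outer (basis k) y))"
proof (intro ext)
  fix i j
  have "outer x y i j = (\<Sum>k\<in>{k. x k \<noteq> 0}. x k * basis k i) * cnj (y j)"
    by (simp add: outer_def flip: De_basis_expansion[OF assms])
  then show "outer x y i j = msum {k. x k \<noteq> 0} (\<lambda>k. mscale (x k) (outer (basis k) y)) i j"
    by (simp add: msum_def mscale_def outer_def sum_distrib_right mult.assoc)
qed

lemma mat_app_basis: "mat_app A (basis j) = (\<lambda>i. A i j)"
  unfolding mat_app_def basis_def
  by (rule ext, subst infsum_cong_neutral[where T="{j}" and g="\<lambda>_. A i j" for i]) auto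

lemma mat_app_De: "x \<in> De \<Longrightarrow> mat_app A x i = (\<Sum>j\<in>{j. x j \<noteq> 0}. A i j * x j)"
  unfolding mat_app_def De_def
  by (subst infsum_cong_neutral[where T="{j. x j \<noteq> 0}" and g="\<lambda>j. A i j * x j"]) auto

lemma mat_app_mscale: "mat_app (mscale c A) x = (\<lambda>i. c * mat_app A x i)"
  unfolding mat_app_def mscale_def by (simp add: mult.assoc infsum_cmult_right')

lemma mat_app_msum:
  "finite S \<Longrightarrow> x \<in> De \<Longrightarrow> mat_app (msum S f) x i = (\<Sum>k\<in>S. mat_app (f k) x i)"
  by (simp add: mat_app_De msum_def sum_distrib_right) (rule sum.swap)

lemma trace_class_column_ell2:
  assumes A: "trace_class A"
  shows "(\<lambda>i. A i j) \<in> ell2"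
proof -
  have "(\<Sum>i\<in>F. (cmod (A i j))^2) \<le> (tnorm A)^2" if F: "finite F" for F
  proof -
    define s where "s = (\<Sum>i\<in>F. (cmod (A i j))^2)"
    define z where "z i = (if i \<in> F then A i j else 0)" for i
    have s0: "s \<ge> 0" unfolding s_def by (auto intro: sum_nonneg)
    have z: "z \<in> ell2"
      using F by (intro ell2_finite_support) (auto simp: z_def intro: finite_subset)
    have vz: "vnorm z = sqrt s"
      unfolding s_def by (subst vnorm_finite_support[OF F]) (auto simp: z_def)
    have "braket z A (basis j) = (\<Sum>i\<in>F. cnj (z i) * A i j)"
      unfolding braket_def mat_app_basis by (rule cinner_finite_support[OF F]) (simp add: z_def)
    also have "\<dots> = complex_of_real s"
      unfolding s_def of_real_sum
      by (rule sum.cong) (auto simp: z_def complex_norm_square mult.commute simp del: of_real_power)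
    finally have le: "sqrt s * sqrt s \<le> sqrt s * tnorm A"
      using norm_braket_le_tnorm[OF A z basis_ell2, of j] s0 by (simp add: vz vnorm_basis)
    show ?thesis
    proof (cases "s = 0")
      case False
      then have "0 < sqrt s"
        using s0 by simp
      then have "sqrt s \<le> tnorm A"
        using le by (simp only: mult_le_cancel_left_pos)
      then have "(sqrt s)^2 \<le> (tnorm A)^2"
        using s0 by (intro power_mono) simp_all
      then show ?thesis
        using s0 by (simp add: s_def)
    qed (simp add: s_def)
  qed
  then have "(\<lambda>i. (cmod (A i j))^2) summable_on UNIV"
    by (intro nonneg_bdd_above_summable_on) (auto intro!: bdd_aboveI2[where M="(tnorm A)^2"])
  then show ?thesis by (simp add: ell2_def)
qed

lemma mat_app_ell2:
  assumes "trace_class A" "x \<in> De"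
  shows "mat_app A x \<in> ell2"
proof -
  have "(\<lambda>i. x j * A i j) \<in> ell2" for j
    by (rule ell2_scale[OF trace_class_column_ell2[OF assms(1)]])
  then have "(\<lambda>i. \<Sum>j\<in>{j. x j \<noteq> 0}. A i j * x j) \<in> ell2"
    using assms(2) by (intro ell2_sum) (auto simp: De_def mult.commute)
  moreover have "mat_app A x = (\<lambda>i. \<Sum>j\<in>{j. x j \<noteq> 0}. A i j * x j)"
    using mat_app_De[OF assms(2)] by blast
  ultimately show ?thesis
    by simp
qed

lemma braket_madd:
  assumes "trace_class A" "trace_class B" "x \<in> ell2" "y \<in> ell2"
  shows "braket x (madd A B) y = braket x A y + braket x B y"
proof -
  have sums: "braket_terms x A y summable_on UNIV" "braket_terms x B y summable_on UNIV"
    using assms by (auto intro: braket_terms_summable)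
  have "braket_terms x (madd A B) y = (\<lambda>p. braket_terms x A y p + braket_terms x B y p)"
    by (auto simp: braket_terms_def madd_def algebra_simps)
  with sums show ?thesis
    by (simp add: braket_eq_infsum_terms summable_on_add infsum_add)
qed

lemma braket_mscale: "braket x (mscale c A) y = c * braket x A y"
  unfolding braket_def mat_app_mscale by (rule cinner_scale_right)

lemma braket_msub:
  "trace_class A \<Longrightarrow> trace_class B \<Longrightarrow> x \<in> ell2 \<Longrightarrow> y \<in> ell2
    \<Longrightarrow> braket x (msub A B) y = braket x A y - braket x B y"
  unfolding msub_eq_madd by (simp add: braket_madd trace_class_mscale braket_mscale)

lemma braket_basis: "braket (basis i) A (basis j) = A i j"
  by (simp add: braket_def mat_app_basis cinner_basis)

lemma braket_outer: "braket p (outer x y) q = cinner p x * cinner y q"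
proof -
  have "mat_app (outer x y) q = (\<lambda>i. x i * cinner y q)"
    unfolding mat_app_def outer_def cinner_def by (simp add: mult.assoc infsum_cmult_right')
  then show ?thesis
    unfolding braket_def cinner_def by (simp add: mult.assoc[symmetric] infsum_cmult_left')
qed

lemma braket_scale_left: "braket (\<lambda>i. c * x i) A y = cnj c * braket x A y"
  unfolding braket_def by (rule cinner_scale_left)

lemma braket_scale_right: "braket x A (\<lambda>i. c * y i) = c * braket x A y"
proof -
  have "mat_app A (\<lambda>i. c * y i) = (\<lambda>i. c * mat_app A y i)"
    unfolding mat_app_def by (simp add: mult.left_commute infsum_cmult_right')
  then show ?thesis
    unfolding braket_def by (simp add: cinner_scale_right)
qed


section \<open>The generator\<close>

lemma has_gen_braket_tendsto:
  assumes q: "qds T" and g: "has_gen T A B" and x: "x \<in> ell2" and y: "y \<in> ell2"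
  shows "((\<lambda>t. (braket x (T t A) y - braket x A y) / complex_of_real t) \<longlongrightarrow> braket x B y) (at_right 0)"
proof -
  define R where "R t = msub (mscale (complex_of_real (1 / t)) (msub (T t A) A)) B" for t
  have A: "trace_class A" and B: "trace_class B" and R: "((\<lambda>t. tnorm (R t)) \<longlongrightarrow> 0) (at_right 0)"
    using g by (auto simp: has_gen_def R_def)
  have pos: "\<forall>\<^sub>F t in at_right (0::real). t > 0"
    by (rule eventually_at_right_less)
  have TA: "t > 0 \<Longrightarrow> trace_class (T t A)" for t
    using q A by (simp add: qds_def)
  have "((\<lambda>t. braket x (R t) y) \<longlongrightarrow> 0) (at_right 0)"
  proof (rule Lim_null_comparison)
    show "\<forall>\<^sub>F t in at_right 0. norm (braket x (R t) y) \<le> vnorm x * vnorm y * tnorm (R t)"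
      using pos by eventually_elim
        (use A B TA in \<open>auto intro!: norm_braket_le_tnorm x y trace_class_msub trace_class_mscale simp: R_def\<close>)
    show "((\<lambda>t. vnorm x * vnorm y * tnorm (R t)) \<longlongrightarrow> 0) (at_right 0)"
      using tendsto_mult_right_zero[OF R] .
  qed
  then have "((\<lambda>t. braket x (R t) y + braket x B y) \<longlongrightarrow> braket x B y) (at_right 0)"
    using tendsto_add[OF _ tendsto_const] by fastforce
  moreover have "\<forall>\<^sub>F t in at_right 0.
      braket x (R t) y + braket x B y = (braket x (T t A) y - braket x A y) / complex_of_real t"
    using pos by eventually_elim
      (use A B TA x y in \<open>simp add: R_def braket_msub trace_class_msub trace_class_mscale
        braket_mscale divide_inverse mult.commute of_real_inverse\<close>)
  ultimately show ?thesis
    by (rule Lim_transform_eventually)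
qed

lemma has_gen_entry_tendsto:
  "qds T \<Longrightarrow> has_gen T A B \<Longrightarrow> ((\<lambda>t. (T t A i j - A i j) / complex_of_real t) \<longlongrightarrow> B i j) (at_right 0)"
  using has_gen_braket_tendsto[OF _ _ basis_ell2 basis_ell2, of T A B i j] by (simp add: braket_basis)

lemma has_gen_unique:
  assumes "qds T" "has_gen T A B" "has_gen T A B'"
  shows "B = B'"
proof (intro ext)
  fix i j
  show "B i j = B' i j"
    using tendsto_unique[OF trivial_limit_at_right_real
        has_gen_entry_tendsto[OF assms(1,2)] has_gen_entry_tendsto[OF assms(1,3)]] .
qed

lemma gen_eqI: "qds T \<Longrightarrow> has_gen T A B \<Longrightarrow> gen T A = B"
  unfolding gen_def using has_gen_unique by blast

lemma has_gen_gen: "qds T \<Longrightarrow> A \<in> gen_dom T \<Longrightarrow> has_gen T A (gen T A)"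
  unfolding gen_dom_def using gen_eqI by blast

lemma trace_class_gen: "qds T \<Longrightarrow> A \<in> gen_dom T \<Longrightarrow> trace_class (gen T A)"
  using has_gen_gen has_gen_def by blast

lemma gen_linear:
  assumes q: "qds T" and A: "A \<in> gen_dom T" and A': "A' \<in> gen_dom T"
    and C: "madd (mscale a A) (mscale b A') \<in> gen_dom T"
  shows "gen T (madd (mscale a A) (mscale b A')) = madd (mscale a (gen T A)) (mscale b (gen T A'))"
proof (intro ext)
  fix i j
  let ?C = "madd (mscale a A) (mscale b A')"
  let ?dq = "\<lambda>A t. (T t A i j - A i j) / complex_of_real t"
  have hA: "has_gen T A (gen T A)" and hA': "has_gen T A' (gen T A')" and hC: "has_gen T ?C (gen T ?C)"
    using has_gen_gen[OF q] A A' C by auto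
  have tc: "trace_class A" "trace_class A'"
    using hA hA' by (auto simp: has_gen_def)
  have "\<forall>\<^sub>F t in at_right 0. a * ?dq A t + b * ?dq A' t = ?dq ?C t"
    using eventually_at_right_less
  proof eventually_elim
    case (elim t)
    then have "T t ?C = madd (mscale a (T t A)) (mscale b (T t A'))"
      using q tc by (auto simp: qds_def tc_linear_def)
    then show ?case
      by (simp add: madd_def mscale_def algebra_simps diff_divide_distrib add_divide_distrib)
  qed
  then have "(?dq ?C \<longlongrightarrow> a * gen T A i j + b * gen T A' i j) (at_right 0)"
    by (rule Lim_transform_eventually[rotated])
       (intro tendsto_add tendsto_mult_left has_gen_entry_tendsto[OF q hA] has_gen_entry_tendsto[OF q hA'])
  from tendsto_unique[OF trivial_limit_at_right_real has_gen_entry_tendsto[OF q hC] this]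
  show "gen T ?C i j = madd (mscale a (gen T A)) (mscale b (gen T A')) i j"
    by (simp add: madd_def mscale_def)
qed

lemma gen_mzero:
  assumes q: "qds T" and z: "mzero \<in> gen_dom T"
  shows "gen T mzero = mzero"
proof -
  have e: "madd (mscale 0 mzero) (mscale 0 mzero) = mzero"
    by (simp add: madd_def mscale_def mzero_def)
  have "gen T (madd (mscale 0 mzero) (mscale 0 mzero)) = madd (mscale 0 (gen T mzero)) (mscale 0 (gen T mzero))"
    by (rule gen_linear[OF q z z]) (simp add: e z)
  then show ?thesis
    by (simp add: e) (simp add: madd_def mscale_def mzero_def)
qed

lemma gen_msum:
  assumes q: "qds T" and d: "De2 \<subseteq> gen_dom T" and S: "finite S" and f: "\<And>k. k \<in> S \<Longrightarrow> f k \<in> De2"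
  shows "gen T (msum S (\<lambda>k. mscale (a k) (f k))) = msum S (\<lambda>k. mscale (a k) (gen T (f k)))"
  using S f
proof (induction S rule: finite_induct)
  case empty
  then show ?case
    using gen_mzero[OF q d[THEN subsetD, OF De2_mzero]] by (simp add: msum_empty)
next
  case (insert k S)
  let ?rest = "msum S (\<lambda>k. mscale (a k) (f k))"
  have "msum (insert k S) (\<lambda>k. mscale (a k) (f k)) = madd (mscale 1 ?rest) (mscale (a k) (f k))"
    using insert(1,2) by (simp add: msum_def madd_def mscale_def add.commute)
  moreover have "?rest \<in> De2" "f k \<in> De2"
    using insert by (auto intro!: De2_msum De2_mscale)
  ultimately have "gen T (msum (insert k S) (\<lambda>k. mscale (a k) (f k)))
      = madd (mscale 1 (gen T ?rest)) (mscale (a k) (gen T (f k)))"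
    using d by (simp only:) (rule gen_linear[OF q], auto intro!: De2_madd De2_mscale)
  then show ?case
    using insert by (simp add: msum_def madd_def mscale_def add.commute)
qed


section \<open>Positivity\<close>

lemma cnonneg_tendsto:
  assumes f: "(f \<longlongrightarrow> z) (at_right (0::real))" and nonneg: "\<forall>\<^sub>F t in at_right 0. cnonneg (f t)"
  shows "cnonneg z"
proof -
  have "((\<lambda>t. Im (f t)) \<longlongrightarrow> 0) (at_right 0)"
    using nonneg by (intro Lim_transform_eventually[OF tendsto_const]) (auto elim: eventually_mono simp: cnonneg_def)
  then have "Im z = 0"
    using tendsto_unique[OF trivial_limit_at_right_real tendsto_Im[OF f]] by blast
  moreover have "0 \<le> Re z"
    using nonneg by (intro tendsto_lowerbound[OF tendsto_Re[OF f] _ trivial_limit_at_right_real])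
      (auto elim: eventually_mono simp: cnonneg_def)
  ultimately show ?thesis
    by (simp add: cnonneg_def)
qed

lemma cnonneg_divide: "cnonneg z \<Longrightarrow> t > 0 \<Longrightarrow> cnonneg (z / complex_of_real t)"
  by (simp add: cnonneg_def Re_divide_of_real Im_divide_of_real)

lemma cp_onD:
  fixes N :: nat
  shows "cp_on D \<Phi> \<Longrightarrow> (\<And>k. k < N \<Longrightarrow> \<phi> k \<in> D \<and> \<psi> k \<in> ell2)
    \<Longrightarrow> cnonneg (\<Sum>k<N. \<Sum>l<N. braket (\<psi> k) (\<Phi> (outer (\<phi> k) (\<phi> l))) (\<psi> l))"
  unfolding cp_on_def braket_def by blast

text \<open>Complete positivity with two vectors (the second one also rotated by \<open>\<i>\<close>) pins down both
  the real and the imaginary part of the off-diagonal matrix elements.\<close>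

lemma cp_on_hermitian:
  assumes cp: "cp_on ell2 \<Phi>" and x: "x \<in> ell2" and y: "y \<in> ell2" and p: "p \<in> ell2" and q: "q \<in> ell2"
  shows "braket q (\<Phi> (outer y x)) p = cnj (braket p (\<Phi> (outer x y)) q)"
proof -
  define B where "B = braket p (\<Phi> (outer x y)) q"
  define C where "C = braket q (\<Phi> (outer y x)) p"
  have diag: "Im (braket r (\<Phi> (outer z z)) r) = 0" if "z \<in> ell2" "r \<in> ell2" for z r
    using cp_onD[OF cp, of 1 "\<lambda>_. z" "\<lambda>_. r"] that by (simp add: cnonneg_def)
  have two: "cnonneg (braket p (\<Phi> (outer x x)) p + braket p (\<Phi> (outer x y)) r
      + (braket r (\<Phi> (outer y x)) p + braket r (\<Phi> (outer y y)) r))" if "r \<in> ell2" for r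
    using cp_onD[OF cp, of 2 "\<lambda>k. if k = 0 then x else y" "\<lambda>k. if k = 0 then p else r"] that x y p
    by (simp add: numeral_2_eq_2)
  have "Im B + Im C = 0"
    using two[OF q] diag[OF x p] diag[OF y q] by (simp add: cnonneg_def B_def C_def)
  moreover have "Re B - Re C = 0"
    using two[OF ell2_scale[OF q, of \<i>]] diag[OF x p] diag[OF y q]
    by (simp add: cnonneg_def braket_scale_left braket_scale_right B_def C_def)
  ultimately have "C = cnj B"
    by (simp add: complex_eq_iff)
  then show ?thesis
    by (simp add: B_def C_def)
qed

lemma gen_hermitian:
  assumes q0: "qds T" and x: "x \<in> ell2" and y: "y \<in> ell2" and p: "p \<in> ell2" and q: "q \<in> ell2"
    and dom: "outer x y \<in> gen_dom T" "outer y x \<in> gen_dom T"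
  shows "braket q (gen T (outer y x)) p = cnj (braket p (gen T (outer x y)) q)"
proof -
  let ?dq = "\<lambda>p A q t. (braket p (T t A) q - braket p A q) / complex_of_real t"
  have "\<forall>\<^sub>F t in at_right 0. cnj (?dq p (outer x y) q t) = ?dq q (outer y x) p t"
    using eventually_at_right_less
  proof eventually_elim
    case (elim t)
    have "braket q (T t (outer y x)) p = cnj (braket p (T t (outer x y)) q)"
      using q0 elim by (intro cp_on_hermitian x y p q) (simp add: qds_def)
    moreover have "braket q (outer y x) p = cnj (braket p (outer x y) q)"
      by (simp add: braket_outer cinner_commute[of q y] cinner_commute[of x p] mult.commute)
    ultimately show ?case by simp
  qed
  then have "(?dq q (outer y x) p \<longlongrightarrow> cnj (braket p (gen T (outer x y)) q)) (at_right 0)"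
    by (rule Lim_transform_eventually[rotated])
       (intro tendsto_cnj has_gen_braket_tendsto[OF q0 has_gen_gen[OF q0 dom(1)] p q])
  from tendsto_unique[OF trivial_limit_at_right_real
      has_gen_braket_tendsto[OF q0 has_gen_gen[OF q0 dom(2)] q p] this]
  show ?thesis .
qed

lemma gen_conditionally_cp:
  fixes N :: nat
  assumes q0: "qds T" and vecs: "\<And>k. k < N \<Longrightarrow> \<phi> k \<in> ell2 \<and> \<psi> k \<in> ell2"
    and dom: "\<And>k l. k < N \<Longrightarrow> l < N \<Longrightarrow> outer (\<phi> k) (\<phi> l) \<in> gen_dom T"
    and orth: "(\<Sum>k<N. cinner (\<psi> k) (\<phi> k)) = 0"
  shows "cnonneg (\<Sum>k<N. \<Sum>l<N. braket (\<psi> k) (gen T (outer (\<phi> k) (\<phi> l))) (\<psi> l))"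
proof (rule cnonneg_tendsto)
  let ?dq = "\<lambda>t k l. (braket (\<psi> k) (T t (outer (\<phi> k) (\<phi> l))) (\<psi> l)
      - braket (\<psi> k) (outer (\<phi> k) (\<phi> l)) (\<psi> l)) / complex_of_real t"
  show "((\<lambda>t. \<Sum>k<N. \<Sum>l<N. ?dq t k l)
      \<longlongrightarrow> (\<Sum>k<N. \<Sum>l<N. braket (\<psi> k) (gen T (outer (\<phi> k) (\<phi> l))) (\<psi> l))) (at_right 0)"
    using vecs dom by (intro tendsto_sum has_gen_braket_tendsto[OF q0] has_gen_gen[OF q0]) auto
  have rank_one: "(\<Sum>k<N. \<Sum>l<N. braket (\<psi> k) (outer (\<phi> k) (\<phi> l)) (\<psi> l)) = 0"
    by (simp add: braket_outer sum_distrib_left[symmetric] sum_distrib_right[symmetric] orth)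
  show "\<forall>\<^sub>F t in at_right 0. cnonneg (\<Sum>k<N. \<Sum>l<N. ?dq t k l)"
    using eventually_at_right_less
  proof eventually_elim
    case (elim t)
    have "cnonneg (\<Sum>k<N. \<Sum>l<N. braket (\<psi> k) (T t (outer (\<phi> k) (\<phi> l))) (\<psi> l))"
      using q0 elim vecs by (intro cp_onD[of ell2]) (auto simp: qds_def)
    then show ?case
      using elim rank_one
      by (simp add: sum_divide_distrib[symmetric] sum_subtractf cnonneg_divide)
  qed
qed

lemma sum_lessThan_Suc_square:
  fixes f :: "nat \<Rightarrow> nat \<Rightarrow> 'a::comm_monoid_add"
  shows "(\<Sum>k<Suc N. \<Sum>l<Suc N. f k l)
    = (\<Sum>k<N. \<Sum>l<N. f k l) + (\<Sum>k<N. f k N) + (\<Sum>l<N. f N l) + f N N"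
  by (simp add: sum.distrib ac_simps)


section \<open>The operator \<open>M\<close> and the map \<open>L\<^sub>+\<close>\<close>

definition Mop_scalar :: "(real \<Rightarrow> 'i mat \<Rightarrow> 'i mat) \<Rightarrow> 'i vec \<Rightarrow> complex" where
  "Mop_scalar T chi = (1/2) * braket chi (gen T (outer chi chi)) chi"

lemma Mop_eq: "Mop T chi \<psi> = (\<lambda>i. Mop_scalar T chi * \<psi> i - mat_app (gen T (outer \<psi> chi)) chi i)"
  by (simp add: Mop_def Mop_scalar_def braket_def)

context
  fixes T :: "real \<Rightarrow> 'i mat \<Rightarrow> 'i mat" and chi :: "'i vec"
  assumes qds: "qds T" and core: "De2 \<subseteq> gen_dom T" and chi: "chi \<in> De"
begin

lemma outer_chi_gen_dom: "\<psi> \<in> De \<Longrightarrow> outer \<psi> chi \<in> gen_dom T"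
  using De2_outer[OF _ chi] core by blast

lemma mat_app_gen_outer_ell2: "\<psi> \<in> De \<Longrightarrow> mat_app (gen T (outer \<psi> chi)) chi \<in> ell2"
  by (intro mat_app_ell2 trace_class_gen[OF qds] outer_chi_gen_dom chi)

lemma Mop_ell2: "\<psi> \<in> De \<Longrightarrow> Mop T chi \<psi> \<in> ell2"
  unfolding Mop_eq by (intro ell2_diff ell2_scale De_imp_ell2 mat_app_gen_outer_ell2)

lemma Mop_cinner:
  assumes \<psi>: "\<psi> \<in> De" and x: "x \<in> ell2"
  shows "cinner x (Mop T chi \<psi>) = Mop_scalar T chi * cinner x \<psi> - braket x (gen T (outer \<psi> chi)) chi"
  unfolding Mop_eq braket_def
  by (simp add: cinner_diff_right[OF x] ell2_scale De_imp_ell2[OF \<psi>] mat_app_gen_outer_ell2[OF \<psi>]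
      cinner_scale_right)

lemma Mop_basis_expansion:
  assumes \<psi>: "\<psi> \<in> De"
  shows "Mop T chi \<psi> i = (\<Sum>k\<in>{k. \<psi> k \<noteq> 0}. \<psi> k * Mop T chi (basis k) i)"
proof -
  let ?S = "{k. \<psi> k \<noteq> 0}" and ?m = "\<lambda>k. mat_app (gen T (outer (basis k) chi)) chi i"
  have S: "finite ?S"
    using \<psi> by (simp add: De_def)
  have "gen T (outer \<psi> chi) = msum ?S (\<lambda>k. mscale (\<psi> k) (gen T (outer (basis k) chi)))"
    unfolding outer_basis_expansion[OF \<psi>]
    by (intro gen_msum[OF qds core S] De2_outer basis_De chi)
  then have "mat_app (gen T (outer \<psi> chi)) chi i = (\<Sum>k\<in>?S. \<psi> k * ?m k)"
    by (simp add: mat_app_msum[OF S chi] mat_app_mscale)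
  then have "Mop T chi \<psi> i = Mop_scalar T chi * (\<Sum>k\<in>?S. \<psi> k * basis k i) - (\<Sum>k\<in>?S. \<psi> k * ?m k)"
    by (simp add: Mop_eq flip: De_basis_expansion[OF \<psi>])
  also have "\<dots> = (\<Sum>k\<in>?S. \<psi> k * (Mop_scalar T chi * basis k i - ?m k))"
    by (simp add: sum_distrib_left right_diff_distrib sum_subtractf mult.left_commute)
  finally show ?thesis
    by (simp add: Mop_eq)
qed

lemma Lplus_outer:
  assumes \<phi>: "\<phi> \<in> De" and \<phi>': "\<phi>' \<in> De"
  shows "Lplus T chi (outer \<phi> \<phi>')
    = madd (madd (gen T (outer \<phi> \<phi>')) (outer (Mop T chi \<phi>) \<phi>')) (outer \<phi> (Mop T chi \<phi>'))"
proof (intro ext)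
  fix i j
  have S: "finite {k. \<phi> k \<noteq> 0}" "finite {l. \<phi>' l \<noteq> 0}"
    using \<phi> \<phi>' by (auto simp: De_def)
  have "infsum (\<lambda>k. Mop T chi (basis k) i * outer \<phi> \<phi>' k j) UNIV
      = (\<Sum>k\<in>{k. \<phi> k \<noteq> 0}. \<phi> k * Mop T chi (basis k) i) * cnj (\<phi>' j)"
    using S by (subst infsum_cong_neutral[where T="{k. \<phi> k \<noteq> 0}"])
      (auto simp: outer_def sum_distrib_left mult_ac)
  moreover have "infsum (\<lambda>l. outer \<phi> \<phi>' i l * cnj (Mop T chi (basis l) j)) UNIV
      = \<phi> i * cnj (\<Sum>l\<in>{l. \<phi>' l \<noteq> 0}. \<phi>' l * Mop T chi (basis l) j)"
    using S by (subst infsum_cong_neutral[where T="{l. \<phi>' l \<noteq> 0}"])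
      (auto simp: outer_def sum_distrib_left mult_ac)
  ultimately show "Lplus T chi (outer \<phi> \<phi>') i j
    = madd (madd (gen T (outer \<phi> \<phi>')) (outer (Mop T chi \<phi>) \<phi>')) (outer \<phi> (Mop T chi \<phi>')) i j"
    by (simp add: Lplus_def madd_def outer_def Mop_basis_expansion[OF \<phi>] Mop_basis_expansion[OF \<phi>'])
qed

lemma Lplus_braket_outer:
  assumes \<phi>: "\<phi> \<in> De" and \<phi>': "\<phi>' \<in> De" and x: "x \<in> ell2" and y: "y \<in> ell2"
  shows "braket x (Lplus T chi (outer \<phi> \<phi>')) y = braket x (gen T (outer \<phi> \<phi>')) y
     + cinner x (Mop T chi \<phi>) * cinner \<phi>' y + cinner x \<phi> * cinner (Mop T chi \<phi>') y"
proof -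
  have "trace_class (gen T (outer \<phi> \<phi>'))"
    using De2_outer[OF \<phi> \<phi>'] core by (auto intro: trace_class_gen[OF qds])
  moreover have "trace_class (outer (Mop T chi \<phi>) \<phi>')" "trace_class (outer \<phi> (Mop T chi \<phi>'))"
    using Mop_ell2[OF \<phi>] Mop_ell2[OF \<phi>'] De_imp_ell2[OF \<phi>] De_imp_ell2[OF \<phi>']
    by (auto intro: trace_class_outer)
  ultimately show ?thesis
    using x y by (simp add: Lplus_outer[OF \<phi> \<phi>'] braket_madd trace_class_madd braket_outer)
qed

lemma Lplus_trace_class:
  assumes \<rho>: "\<rho> \<in> De2"
  shows "trace_class (Lplus T chi \<rho>)"
proof -
  define P where "P = {(i, j). \<rho> i j \<noteq> 0}"
  have P: "finite P" using \<rho> by (simp add: De2_def P_def)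
  have rows: "\<rho> k j = 0" if "k \<notin> fst ` P" for k j using that by (force simp: P_def)
  have cols: "\<rho> i l = 0" if "l \<notin> snd ` P" for i l using that by (force simp: P_def)
  have "Lplus T chi \<rho> = madd (gen T \<rho>)
      (madd (msum (fst ` P) (\<lambda>k. outer (Mop T chi (basis k)) (\<lambda>j. cnj (\<rho> k j))))
            (msum (snd ` P) (\<lambda>l. outer (\<lambda>i. \<rho> i l) (Mop T chi (basis l)))))"
  proof (intro ext)
    fix i j
    have "infsum (\<lambda>k. Mop T chi (basis k) i * \<rho> k j) UNIV = (\<Sum>k\<in>fst ` P. Mop T chi (basis k) i * \<rho> k j)"
      using P rows by (subst infsum_cong_neutral[where T="fst ` P"]) auto
    moreover have "infsum (\<lambda>l. \<rho> i l * cnj (Mop T chi (basis l) j)) UNIV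
        = (\<Sum>l\<in>snd ` P. \<rho> i l * cnj (Mop T chi (basis l) j))"
      using P cols by (subst infsum_cong_neutral[where T="snd ` P"]) auto
    ultimately show "Lplus T chi \<rho> i j = madd (gen T \<rho>)
      (madd (msum (fst ` P) (\<lambda>k. outer (Mop T chi (basis k)) (\<lambda>j. cnj (\<rho> k j))))
            (msum (snd ` P) (\<lambda>l. outer (\<lambda>i. \<rho> i l) (Mop T chi (basis l))))) i j"
      by (simp add: Lplus_def madd_def msum_def outer_def)
  qed
  moreover have "(\<lambda>j. cnj (\<rho> k j)) \<in> ell2" for k
    by (rule ell2_finite_support, rule finite_subset[of _ "snd ` P"]) (use P cols in auto)
  moreover have "(\<lambda>i. \<rho> i l) \<in> ell2" for l
    by (rule ell2_finite_support, rule finite_subset[of _ "fst ` P"]) (use P rows in auto)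
  ultimately show ?thesis
    using \<rho> core P
    by (auto intro!: trace_class_madd trace_class_gen[OF qds] trace_class_msum trace_class_outer
        Mop_ell2 basis_De)
qed

lemma Mop_scalar_real: "cnj (Mop_scalar T chi) = Mop_scalar T chi"
proof -
  have "braket chi (gen T (outer chi chi)) chi = cnj (braket chi (gen T (outer chi chi)) chi)"
    using chi by (intro gen_hermitian[OF qds] De_imp_ell2 outer_chi_gen_dom)
  then show ?thesis
    by (simp add: Mop_scalar_def)
qed

lemma Lplus_braket_sum:
  fixes N :: nat
  assumes vecs: "\<forall>k<N. \<phi> k \<in> De \<and> \<psi> k \<in> ell2"
  shows "(\<Sum>k<N. \<Sum>l<N. cinner (\<psi> k) (mat_app (Lplus T chi (outer (\<phi> k) (\<phi> l))) (\<psi> l)))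
    = (\<Sum>k<N. \<Sum>l<N. braket (\<psi> k) (gen T (outer (\<phi> k) (\<phi> l))) (\<psi> l))
      + (\<Sum>k<N. cinner (\<psi> k) (Mop T chi (\<phi> k))) * cnj (\<Sum>k<N. cinner (\<psi> k) (\<phi> k))
      + (\<Sum>k<N. cinner (\<psi> k) (\<phi> k)) * cnj (\<Sum>k<N. cinner (\<psi> k) (Mop T chi (\<phi> k)))"
proof -
  have "cinner (\<psi> k) (mat_app (Lplus T chi (outer (\<phi> k) (\<phi> l))) (\<psi> l))
      = braket (\<psi> k) (gen T (outer (\<phi> k) (\<phi> l))) (\<psi> l)
        + cinner (\<psi> k) (Mop T chi (\<phi> k)) * cnj (cinner (\<psi> l) (\<phi> l))
        + cinner (\<psi> k) (\<phi> k) * cnj (cinner (\<psi> l) (Mop T chi (\<phi> l)))"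
    if "k < N" "l < N" for k l
    using that vecs Lplus_braket_outer[of "\<phi> k" "\<phi> l" "\<psi> k" "\<psi> l"]
    by (simp add: braket_def cinner_commute[of "\<phi> l"] cinner_commute[of "Mop T chi (\<phi> l)"])
  then show ?thesis
    by (simp add: sum.distrib sum_product cnj_sum)
qed

lemma gen_braket_sum_append:
  fixes N :: nat and b :: complex
  assumes vecs: "\<forall>k<N. \<phi> k \<in> De \<and> \<psi> k \<in> ell2"
  defines "\<phi>' \<equiv> \<phi>(N := chi)" and "\<psi>' \<equiv> \<psi>(N := (\<lambda>i. b * chi i))"
  shows "(\<Sum>k<Suc N. \<Sum>l<Suc N. braket (\<psi>' k) (gen T (outer (\<phi>' k) (\<phi>' l))) (\<psi>' l))
    = (\<Sum>k<N. \<Sum>l<N. braket (\<psi> k) (gen T (outer (\<phi> k) (\<phi> l))) (\<psi> l))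
      + b * (\<Sum>k<N. braket (\<psi> k) (gen T (outer (\<phi> k) chi)) chi)
      + cnj b * cnj (\<Sum>k<N. braket (\<psi> k) (gen T (outer (\<phi> k) chi)) chi)
      + cnj b * b * braket chi (gen T (outer chi chi)) chi"
proof -
  have "braket chi (gen T (outer chi (\<phi> l))) (\<psi> l) = cnj (braket (\<psi> l) (gen T (outer (\<phi> l) chi)) chi)"
    if "l < N" for l
  proof -
    have \<phi>: "\<phi> l \<in> De" and \<psi>: "\<psi> l \<in> ell2"
      using that vecs by auto
    show ?thesis
      using gen_hermitian[OF qds De_imp_ell2[OF \<phi>] De_imp_ell2[OF chi] \<psi> De_imp_ell2[OF chi]
          outer_chi_gen_dom[OF \<phi>] core[THEN subsetD, OF De2_outer[OF chi \<phi>]]] .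
  qed
  then show ?thesis
    by (simp add: sum_lessThan_Suc_square \<phi>'_def \<psi>'_def braket_scale_left braket_scale_right
        sum_distrib_left sum.distrib cnj_sum)
qed

lemma Lplus_cp_on:
  assumes chi_norm: "cinner chi chi = 1"
  shows "cp_on De (Lplus T chi)"
  unfolding cp_on_def
proof (intro allI impI)
  fix N :: nat and \<phi> \<psi> :: "nat \<Rightarrow> 'i vec"
  assume vecs: "\<forall>k<N. \<phi> k \<in> De \<and> \<psi> k \<in> ell2"
  define a where "a = (\<Sum>k<N. cinner (\<psi> k) (\<phi> k))"
  define P where "P = (\<Sum>k<N. braket (\<psi> k) (gen T (outer (\<phi> k) chi)) chi)"
  define G where "G = (\<Sum>k<N. \<Sum>l<N. braket (\<psi> k) (gen T (outer (\<phi> k) (\<phi> l))) (\<psi> l))"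
  define c where "c = Mop_scalar T chi"
  have "(\<Sum>k<N. cinner (\<psi> k) (Mop T chi (\<phi> k))) = c * a - P"
    using vecs by (simp add: Mop_cinner a_def P_def c_def sum_subtractf sum_distrib_left)
  then have Lplus_sum: "(\<Sum>k<N. \<Sum>l<N. cinner (\<psi> k) (mat_app (Lplus T chi (outer (\<phi> k) (\<phi> l))) (\<psi> l)))
      = G + (c * a - P) * cnj a + a * cnj (c * a - P)"
    using Lplus_braket_sum[OF vecs] by (simp add: a_def G_def)
  let ?\<phi>' = "\<phi>(N := chi)" and ?\<psi>' = "\<psi>(N := (\<lambda>i. - cnj a * chi i))"
  have "cnonneg (\<Sum>k<Suc N. \<Sum>l<Suc N. braket (?\<psi>' k) (gen T (outer (?\<phi>' k) (?\<phi>' l))) (?\<psi>' l))"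
  proof (rule gen_conditionally_cp[OF qds])
    show "?\<phi>' k \<in> ell2 \<and> ?\<psi>' k \<in> ell2" if "k < Suc N" for k
      using that vecs De_imp_ell2[OF chi] ell2_scale[OF De_imp_ell2[OF chi], of "- cnj a"]
      by (auto intro: De_imp_ell2)
    show "outer (?\<phi>' k) (?\<phi>' l) \<in> gen_dom T" if "k < Suc N" "l < Suc N" for k l
      using that vecs chi by (intro core[THEN subsetD] De2_outer) (auto simp: less_Suc_eq)
    have "(\<Sum>k<Suc N. cinner (?\<psi>' k) (?\<phi>' k)) = a + cinner (\<lambda>i. - cnj a * chi i) chi"
      by (simp add: a_def)
    also have "\<dots> = 0"
      using cinner_scale_left[of "- cnj a" chi chi] by (simp add: chi_norm)
    finally show "(\<Sum>k<Suc N. cinner (?\<psi>' k) (?\<phi>' k)) = 0" .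
  qed
  also have "(\<Sum>k<Suc N. \<Sum>l<Suc N. braket (?\<psi>' k) (gen T (outer (?\<phi>' k) (?\<phi>' l))) (?\<psi>' l))
      = G + (c * a - P) * cnj a + a * cnj (c * a - P)"
    using gen_braket_sum_append[OF vecs, of "- cnj a"] Mop_scalar_real
    by (simp add: G_def P_def c_def Mop_scalar_def algebra_simps)
  finally show "cnonneg (\<Sum>k<N. \<Sum>l<N. cinner (\<psi> k) (mat_app (Lplus T chi (outer (\<phi> k) (\<phi> l))) (\<psi> l)))"
    unfolding Lplus_sum .
qed

end

theorem proposition3p3:
  fixes T :: "real \<Rightarrow> ('i::countable) mat \<Rightarrow> 'i mat" and chi :: "'i vec"
  assumes "qds T" and "matrix_normal T" and "chi \<in> De" and "vnorm chi = 1"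
  shows "De \<subseteq> Mdom T chi \<and> (\<forall>\<rho>\<in>De2. trace_class (Lplus T chi \<rho>)) \<and> cp_on De (Lplus T chi)"
proof -
  have core: "De2 \<subseteq> gen_dom T"
    using assms(2) by (simp add: matrix_normal_def)
  have "cinner chi chi = 1"
    using cinner_self[OF De_imp_ell2[OF assms(3)]] assms(4) by simp
  moreover have "De \<subseteq> Mdom T chi"
    using core assms(3) by (auto simp: Mdom_def intro: De_imp_ell2 De2_outer)
  ultimately show ?thesis
    using Lplus_trace_class Lplus_cp_on assms(1,3) core by blast
qed

end
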